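(* Let $G$ be a finite group of odd order and $\alpha$ an automorphism of $G$. Then $|\{g\in G:\alpha(g)=g^3\}|\leq[G:\mathrm{fix}(\alpha)]$, where $\mathrm{fix}(\alpha)=\{g\in G:\alpha(g)=g\}$. In particular, if $|\{g\in G:\alpha(g)=g^3\}|=\rho|G|$ with $\rho>0$, then $|\mathrm{fix}(\alpha)|\leq\rho^{-1}$. *)

theory Defs
  imports "HOL-Algebra.Algebra"
begin

definition fixset :: "('a, 'b) monoid_scheme \<Rightarrow> ('a \<Rightarrow> 'a) \<Rightarrow> 'a set" where
  "fixset G \<alpha> = {g \<in> carrier G. \<alpha> g = g}"

definition cubeset :: "('a, 'b) monoid_scheme \<Rightarrow> ('a \<Rightarrow> 'a) \<Rightarrow> 'a set" where
  "cubeset G \<alpha> = {g \<in> carrier G. \<alpha> g = g [^]\<^bsub>G\<^esub> (3::nat)}"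

end

theory Submission
  imports Defs
begin

text \<open>Write \<open>F\<close> for the fixed-point subgroup of \<open>\<alpha>\<close>. If \<open>g\<close> and \<open>h\<close> are mapped to their cubes
  and lie in the same right coset, \<open>g = f h\<close> with \<open>f \<in> F\<close>, then
  \<open>f h g\<^sup>2 = g\<^sup>3 = \<alpha>(g) = f \<alpha>(h) = f h h\<^sup>2\<close>, so \<open>g\<^sup>2 = h\<^sup>2\<close>. Squaring is injective in a group of
  odd order, hence \<open>g = h\<close>: distinct elements of the cube set lie in distinct cosets of \<open>F\<close>.
  The density bound follows by Lagrange's theorem.\<close>

lemma fixset_subgroup:
  fixes G (structure)
  assumes "group G" and hom: "\<alpha> \<in> hom G G"
  shows "subgroup (fixset G \<alpha>) G"
proof -
  interpret group_hom G G \<alpha>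
    using assms by (simp add: group_hom_def group_hom_axioms_def)
  show ?thesis
  proof (rule G.subgroupI)
    show "fixset G \<alpha> \<subseteq> carrier G" "fixset G \<alpha> \<noteq> {}"
      by (auto simp: fixset_def intro!: exI[of _ \<one>])
  next
    fix x y assume "x \<in> fixset G \<alpha>" "y \<in> fixset G \<alpha>"
    then show "inv x \<in> fixset G \<alpha>" "x \<otimes> y \<in> fixset G \<alpha>"
      by (auto simp: fixset_def)
  qed
qed

lemma (in group) square_root_odd_order:
  assumes "odd (order G)" and x: "x \<in> carrier G"
  shows "(x \<otimes> x) [^] (order G div 2 + 1) = x"
proof -
  have "(x \<otimes> x) [^] (order G div 2 + 1) = (x [^] (2::nat)) [^] (order G div 2 + 1)"
    using x by (simp add: numeral_2_eq_2)
  also have "\<dots> = x [^] (order G + 1)"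
    using assms(1) by (simp only: nat_pow_pow[OF x]) (simp add: algebra_simps)
  also have "\<dots> = x"
    using x by (simp add: nat_pow_mult[symmetric] pow_order_eq_1)
  finally show ?thesis .
qed

lemma (in group) square_inj_on_odd_order:
  assumes "odd (order G)"
  shows "inj_on (\<lambda>x. x \<otimes> x) (carrier G)"
  by (rule inj_on_inverseI[where g = "\<lambda>y. y [^] (order G div 2 + 1)"])
    (rule square_root_odd_order[OF assms])

lemma rcoset_inj_on_cubeset:
  fixes G (structure)
  assumes "group G" and odd: "odd (order G)" and hom: "\<alpha> \<in> hom G G"
  shows "inj_on (\<lambda>g. fixset G \<alpha> #> g) (cubeset G \<alpha>)"
proof (rule inj_onI)
  interpret group G by fact
  let ?F = "fixset G \<alpha>"
  fix g h assume "g \<in> cubeset G \<alpha>" "h \<in> cubeset G \<alpha>" and same_coset: "?F #> g = ?F #> h"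
  then have g: "g \<in> carrier G" "\<alpha> g = g \<otimes> (g \<otimes> g)"
    and h: "h \<in> carrier G" "\<alpha> h = h \<otimes> (h \<otimes> h)"
    by (auto simp: cubeset_def numeral_3_eq_3 m_assoc)
  have "g \<in> ?F #> h"
    using same_coset rcos_self[OF g(1) fixset_subgroup[OF assms(1) hom]] by simp
  then obtain f where f: "f \<in> carrier G" "\<alpha> f = f" and g_eq: "g = f \<otimes> h"
    by (auto simp: r_coset_def fixset_def)
  have "(f \<otimes> h) \<otimes> (g \<otimes> g) = \<alpha> (f \<otimes> h)"
    using g g_eq by simp
  also have "\<dots> = (f \<otimes> h) \<otimes> (h \<otimes> h)"
    using f h hom by (simp add: hom_mult m_assoc)
  finally have "g \<otimes> g = h \<otimes> h"
    using f g h by (meson l_cancel m_closed)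
  then show "g = h"
    using square_inj_on_odd_order[OF odd] g(1) h(1) by (auto dest: inj_onD)
qed

lemma card_cubeset_le_index:
  fixes G (structure)
  assumes "group G" and odd: "odd (order G)" and hom: "\<alpha> \<in> hom G G"
  shows "card (cubeset G \<alpha>) \<le> card (rcosets (fixset G \<alpha>))"
proof (rule card_inj_on_le[OF rcoset_inj_on_cubeset[OF assms]])
  interpret group G by fact
  show "(\<lambda>g. fixset G \<alpha> #> g) ` cubeset G \<alpha> \<subseteq> rcosets (fixset G \<alpha>)"
    by (auto simp: cubeset_def RCOSETS_def)
  have "finite (carrier G)"
    using odd order_gt_0_iff_finite by (metis odd_pos)
  then show "finite (rcosets (fixset G \<alpha>))"
    by (simp add: RCOSETS_def)
qed

lemma (in group) card_subgroup_le_inverse_density: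
  assumes "subgroup H G" and "finite (carrier G)" and "\<rho> > 0"
    and "\<rho> * real (order G) \<le> real (card (rcosets H))"
  shows "real (card H) \<le> 1 / \<rho>"
proof -
  have lagrange: "real (card (rcosets H)) * real (card H) = real (order G)"
    using lagrange[OF assms(1)] by (metis of_nat_mult)
  have "order G > 0"
    using assms(2) order_gt_0_iff_finite by blast
  have "\<rho> * real (order G) * real (card H) \<le> real (order G)"
    using mult_right_mono[OF assms(4), of "real (card H)"] lagrange by simp
  then have "\<rho> * real (card H) \<le> 1"
    using \<open>order G > 0\<close> by (simp add: mult.commute mult.left_commute)
  then show ?thesis
    using assms(3) by (simp add: field_simps)
qed

theorem mainTheorem7:
  fixes G (structure) and \<alpha> :: "'a \<Rightarrow> 'a"
  assumes "group G" and "finite (carrier G)" and "odd (order G)"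
    and "\<alpha> \<in> iso G G"
  shows "card (cubeset G \<alpha>) \<le> card (rcosets (fixset G \<alpha>))
         \<and> (\<forall>\<rho>::real. \<rho> > 0 \<and> real (card (cubeset G \<alpha>)) = \<rho> * real (order G)
              \<longrightarrow> real (card (fixset G \<alpha>)) \<le> 1 / \<rho>)"
proof -
  interpret group G by fact
  have hom: "\<alpha> \<in> hom G G"
    using assms(4) by (simp add: iso_def)
  have bound: "card (cubeset G \<alpha>) \<le> card (rcosets (fixset G \<alpha>))"
    using card_cubeset_le_index[OF assms(1,3) hom] .
  show ?thesis
  proof (intro conjI allI impI bound)
    fix \<rho> :: real
    assume "\<rho> > 0 \<and> real (card (cubeset G \<alpha>)) = \<rho> * real (order G)"
    then show "real (card (fixset G \<alpha>)) \<le> 1 / \<rho>"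
      using card_subgroup_le_inverse_density[OF fixset_subgroup[OF assms(1) hom] assms(2)] bound
      by simp
  qed
qed

end
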